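(* Let $(M,\cdot,1)$ be a monoid, $\Sigma$ a finite alphabet, and $\ell:\Sigma^*\to M$ an $M$-language. If there exists a factorization $(g,f)$ on $L$ such that the set $\{S^{(g,f)}_\alpha(\ell)\mid\alpha\in\Sigma^*\}$ is finite, then $\ell$ is a recognizable $M$-language.
   Context: $L$ is the set of all functions $\Sigma^*\to M$ ($M$-languages); $\varepsilon$ is the empty word. For $m\in M$, $\ell\in L$, $m\cdot\ell$ is $\gamma\mapsto m\cdot\ell(\gamma)$. A factorization on $L$ is a pair $(g,f)$ of functions $g:L\to M$, $f:L\to L$ with $g(\ell)\cdot f(\ell)=\ell$ for all $\ell\in L$. For a word $\alpha$, $\Delta_\alpha:L\to L$ is $\Delta_\alpha(\ell)(\gamma)=\ell(\alpha\gamma)$. Define $S^{(g,f)}_\varepsilon$ as the identity on $L$ and $S^{(g,f)}_{\alpha\sigma}=f\circ\Delta_\sigma\circ S^{(g,f)}_\alpha$ for $\alpha\in\Sigma^*$, $\sigma\in\Sigma$. An $M$-DFA is a tuple $A=(Q,\Sigma,u,i_u,\delta,w,\rho)$ with $Q$ finite nonempty, $u\in Q$, $i_u\in M$, $\delta:Q\times\Sigma\to Q$, $w:Q\times\Sigma\to M$, $\rho:Q\to M$. Write $q\alpha$ for the extension of $\delta$ to words ($q\varepsilon=q$, $q(\alpha\sigma)=\delta(q\alpha,\sigma)$), and let $w^*(q,\varepsilon)=1$, $w^*(q,\alpha\sigma)=w^*(q,\alpha)\cdot w(q\alpha,\sigma)$. $A$ recognizes the $M$-language $\alpha\mapsto i_u\cdot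 w^*(u,\alpha)\cdot\rho(u\alpha)$. An $M$-language is recognizable if some $M$-DFA recognizes it. *)

theory Defs
  imports Main
begin

text \<open>M-languages: functions from words (lists over the alphabet 's) to the monoid 'm.
  The empty word is the empty list; \<alpha>\<sigma> (appending a letter) is \<alpha> @ [\<sigma>].\<close>

type_synonym ('s, 'm) mlang = "'s list \<Rightarrow> 'm"

definition scal :: "'m::monoid_mult \<Rightarrow> ('s, 'm) mlang \<Rightarrow> ('s, 'm) mlang" where
  "scal m l = (\<lambda>\<gamma>. m * l \<gamma>)"

definition is_factorization ::
  "(('s, 'm::monoid_mult) mlang \<Rightarrow> 'm) \<Rightarrow> (('s, 'm) mlang \<Rightarrow> ('s, 'm) mlang) \<Rightarrow> bool" where
  "is_factorization g f \<longleftrightarrow> (\<forall>l. scal (g l) (f l) = l)"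

definition Delta :: "'s list \<Rightarrow> ('s, 'm) mlang \<Rightarrow> ('s, 'm) mlang" where
  "Delta \<alpha> l = (\<lambda>\<gamma>. l (\<alpha> @ \<gamma>))"

text \<open>S_\<epsilon> = id and S_{\<alpha>\<sigma>} = f \<circ> \<Delta>_\<sigma> \<circ> S_\<alpha> (recursion on the last letter, via foldl).\<close>
definition S_fac :: "(('s, 'm) mlang \<Rightarrow> ('s, 'm) mlang) \<Rightarrow> 's list \<Rightarrow> ('s, 'm) mlang \<Rightarrow> ('s, 'm) mlang" where
  "S_fac f \<alpha> = foldl (\<lambda>h \<sigma>. f \<circ> Delta [\<sigma>] \<circ> h) id \<alpha>"

lemma S_fac_Nil: "S_fac f [] = id"
  by (simp add: S_fac_def)

lemma S_fac_snoc: "S_fac f (\<alpha> @ [\<sigma>]) = f \<circ> Delta [\<sigma>] \<circ> S_fac f \<alpha>"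
  by (simp add: S_fac_def)

definition is_MDFA :: "nat set \<Rightarrow> nat \<Rightarrow> (nat \<Rightarrow> 's \<Rightarrow> nat) \<Rightarrow> bool" where
  "is_MDFA Q u \<delta> \<longleftrightarrow> finite Q \<and> Q \<noteq> {} \<and> u \<in> Q \<and> (\<forall>q\<in>Q. \<forall>\<sigma>. \<delta> q \<sigma> \<in> Q)"

definition delta_star :: "(nat \<Rightarrow> 's \<Rightarrow> nat) \<Rightarrow> nat \<Rightarrow> 's list \<Rightarrow> nat" where
  "delta_star \<delta> q \<alpha> = foldl \<delta> q \<alpha>"

fun w_star :: "(nat \<Rightarrow> 's \<Rightarrow> nat) \<Rightarrow> (nat \<Rightarrow> 's \<Rightarrow> 'm::monoid_mult) \<Rightarrow> nat \<Rightarrow> 's list \<Rightarrow> 'm" where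
  "w_star \<delta> w q [] = 1"
| "w_star \<delta> w q (\<sigma> # \<alpha>) = w q \<sigma> * w_star \<delta> w (\<delta> q \<sigma>) \<alpha>"

lemma w_star_snoc: "w_star \<delta> w q (\<alpha> @ [\<sigma>]) = w_star \<delta> w q \<alpha> * w (delta_star \<delta> q \<alpha>) \<sigma>"
  by (induction \<alpha> arbitrary: q) (simp_all add: delta_star_def mult.assoc)

definition recognizes ::
  "nat set \<Rightarrow> nat \<Rightarrow> 'm::monoid_mult \<Rightarrow> (nat \<Rightarrow> 's \<Rightarrow> nat) \<Rightarrow> (nat \<Rightarrow> 's \<Rightarrow> 'm) \<Rightarrow> (nat \<Rightarrow> 'm)
     \<Rightarrow> ('s, 'm) mlang \<Rightarrow> bool" where
  "recognizes Q u i\<^sub>u \<delta> w \<rho> l \<longleftrightarrow> is_MDFA Q u \<delta> \<and>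
     (\<forall>\<alpha>. l \<alpha> = i\<^sub>u * w_star \<delta> w u \<alpha> * \<rho> (delta_star \<delta> u \<alpha>))"

definition recognizable :: "('s, 'm::monoid_mult) mlang \<Rightarrow> bool" where
  "recognizable l \<longleftrightarrow> (\<exists>Q u i\<^sub>u \<delta> w \<rho>. recognizes Q u i\<^sub>u \<delta> w \<rho> l)"

end

theory Submission
  imports Defs
begin

(* The finitely many languages S_\<alpha>(l) serve as the states of the automaton. In state x,
   the letter \<sigma> leads to f (\<Delta>_\<sigma> x) with weight g (\<Delta>_\<sigma> x); the factorization identity
   \<Delta>_\<sigma> x = g (\<Delta>_\<sigma> x) \<cdot> f (\<Delta>_\<sigma> x) then gives l(\<alpha>\<gamma>) = w*(\<alpha>) \<cdot> S_\<alpha>(l)(\<gamma>) by induction on \<alpha>,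
   and \<gamma> = \<epsilon> yields l. *)

lemma is_factorizationD: "is_factorization g f \<Longrightarrow> g l * f l \<gamma> = l \<gamma>"
  unfolding is_factorization_def scal_def by metis

lemma delta_star_Cons: "delta_star \<delta> q (\<sigma> # \<alpha>) = delta_star \<delta> (\<delta> q \<sigma>) \<alpha>"
  by (simp add: delta_star_def)

lemma state_language_append:
  assumes closed: "\<forall>q\<in>Q. \<forall>\<sigma>. \<delta> q \<sigma> \<in> Q"
    and step: "\<And>q \<sigma> \<gamma>. q \<in> Q \<Longrightarrow> e q (\<sigma> # \<gamma>) = w q \<sigma> * e (\<delta> q \<sigma>) \<gamma>"
    and "q \<in> Q"
  shows "e q (\<alpha> @ \<gamma>) = w_star \<delta> w q \<alpha> * e (delta_star \<delta> q \<alpha>) \<gamma>"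
  using \<open>q \<in> Q\<close>
proof (induction \<alpha> arbitrary: q)
  case Nil
  then show ?case by (simp add: delta_star_def)
next
  case (Cons \<sigma> \<alpha>)
  have "e q ((\<sigma> # \<alpha>) @ \<gamma>) = w q \<sigma> * e (\<delta> q \<sigma>) (\<alpha> @ \<gamma>)"
    using step[OF Cons.prems] by simp
  also have "\<dots> = w q \<sigma> * (w_star \<delta> w (\<delta> q \<sigma>) \<alpha> * e (delta_star \<delta> (\<delta> q \<sigma>) \<alpha>) \<gamma>)"
    using Cons closed by simp
  finally show ?case by (simp add: delta_star_Cons mult.assoc)
qed

lemma recognizes_state_language:
  assumes "is_MDFA Q u \<delta>"
    and "\<And>q \<sigma> \<gamma>. q \<in> Q \<Longrightarrow> e q (\<sigma> # \<gamma>) = w q \<sigma> * e (\<delta> q \<sigma>) \<gamma>"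
  shows "recognizes Q u 1 \<delta> w (\<lambda>q. e q []) (e u)"
  using assms state_language_append[of Q \<delta> e w u _ "[]"]
  unfolding recognizes_def is_MDFA_def by simp

lemma recognizable_if_finite_closed:
  fixes X :: "('s, 'm::monoid_mult) mlang set"
  assumes fac: "is_factorization g f" and "finite X" and "l \<in> X"
    and closed: "\<And>x \<sigma>. x \<in> X \<Longrightarrow> f (Delta [\<sigma>] x) \<in> X"
  shows "recognizable l"
proof -
  obtain idx :: "('s, 'm) mlang \<Rightarrow> nat" where idx: "inj_on idx X"
    using finite_imp_inj_to_nat_seg[OF \<open>finite X\<close>] by blast
  define e where "e = inv_into X idx"
  define \<delta> where "\<delta> q \<sigma> = idx (f (Delta [\<sigma>] (e q)))" for q \<sigma>
  define w where "w q \<sigma> = g (Delta [\<sigma>] (e q))" for q \<sigma>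
  have e_idx: "e (idx x) = x" if "x \<in> X" for x
    using idx that by (simp add: e_def)
  have e_in: "e q \<in> X" if "q \<in> idx ` X" for q
    using that by (simp add: e_def inv_into_into)
  have "is_MDFA (idx ` X) (idx l) \<delta>"
    using \<open>finite X\<close> \<open>l \<in> X\<close> closed e_in by (auto simp: is_MDFA_def \<delta>_def)
  moreover have "e q (\<sigma> # \<gamma>) = w q \<sigma> * e (\<delta> q \<sigma>) \<gamma>" if "q \<in> idx ` X" for q \<sigma> \<gamma>
  proof -
    have "e q (\<sigma> # \<gamma>) = Delta [\<sigma>] (e q) \<gamma>"
      by (simp add: Delta_def)
    also have "\<dots> = w q \<sigma> * f (Delta [\<sigma>] (e q)) \<gamma>"
      using is_factorizationD[OF fac] by (simp add: w_def)
    finally show ?thesis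
      using e_idx closed e_in[OF that] by (simp add: \<delta>_def)
  qed
  ultimately have "recognizes (idx ` X) (idx l) 1 \<delta> w (\<lambda>q. e q []) (e (idx l))"
    by (rule recognizes_state_language)
  then show ?thesis
    unfolding recognizable_def e_idx[OF \<open>l \<in> X\<close>] by blast
qed

theorem lemma3:
  fixes l :: "'s::finite list \<Rightarrow> 'm::monoid_mult"
  assumes "\<exists>g f. is_factorization g f \<and> finite {S_fac f \<alpha> l | \<alpha>. True}"
  shows "recognizable l"
proof -
  obtain g f where fac: "is_factorization g f" and fin: "finite {S_fac f \<alpha> l | \<alpha>. True}"
    using assms by blast
  have "l \<in> {S_fac f \<alpha> l | \<alpha>. True}"
    by (metis (mono_tags, lifting) S_fac_Nil id_apply mem_Collect_eq)
  moreover have "f (Delta [\<sigma>] x) \<in> {S_fac f \<alpha> l | \<alpha>. True}"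
    if "x \<in> {S_fac f \<alpha> l | \<alpha>. True}" for x \<sigma>
  proof -
    from that obtain \<alpha> where "x = S_fac f \<alpha> l" by blast
    then have "f (Delta [\<sigma>] x) = S_fac f (\<alpha> @ [\<sigma>]) l" by (simp add: S_fac_snoc)
    then show ?thesis by blast
  qed
  ultimately show ?thesis
    using recognizable_if_finite_closed[OF fac fin] by blast
qed

end
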